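(* Let $P$ be a $6\times 6$ unitary pattern that has a row $r$ of weight $4$ and no row of weight $5$ or more. Then at least one of the following holds: (i) there is another row of $P$ of weight $4$ with the same support as $r$, and there is a row of $P$ of weight $2$ whose support is contained in the support of $r$; or (ii) $P$ has at least four rows (counting $r$) of weight at least $3$. In both cases, $P$ has at least four rows of weight at least $2$.
   Context: The pattern of a complex matrix is the $0/1$ matrix obtained by replacing each nonzero entry by $1$. A unitary pattern is a $0/1$ matrix that is the pattern of some unitary matrix. For a row of a $0/1$ matrix, its support is the set of column indices where it has a $1$, and its weight is the number of its ones. *)

theory Defs
  imports "HOL-Analysis.Analysis"
begin

definition conj_transpose :: "complex ^'n^'m \<Rightarrow> complex ^'m^'n" where
  "conj_transpose A = (\<chi> i j. cnj (A $ j $ i))"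

definition unitary_mat :: "complex ^'n^'n \<Rightarrow> bool" where
  "unitary_mat U \<longleftrightarrow> U ** conj_transpose U = mat 1 \<and> conj_transpose U ** U = mat 1"

definition pattern :: "complex ^'n^'m \<Rightarrow> nat ^'n^'m" where
  "pattern A = (\<chi> i j. if A $ i $ j \<noteq> 0 then 1 else 0)"

definition unitary_pattern :: "nat ^'n^'n \<Rightarrow> bool" where
  "unitary_pattern P \<longleftrightarrow> (\<exists>U. unitary_mat U \<and> pattern U = P)"

definition row_support :: "nat ^'n^'m \<Rightarrow> 'm \<Rightarrow> 'n set" where
  "row_support P i = {j. P $ i $ j = 1}"

definition row_weight :: "nat ^'n^'m \<Rightarrow> 'm \<Rightarrow> nat" where
  "row_weight P i = card (row_support P i)"

end

theory Submission
  imports Defs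
begin

text \<open>Orthogonality of the rows of a unitary matrix forbids two row supports from sharing
exactly one column, and orthogonality of the columns forbids a pair of columns from being
covered by exactly one row. Let \<open>S\<close> be the support of \<open>r\<close>. Rows disjoint from \<open>S\<close> live in
the two remaining columns, where at most two pairwise orthogonal nonzero vectors fit; so at
least four rows meet \<open>S\<close>, each in at least two columns. If at most three rows have weight
at least 3, one of these four rows has weight 2 and hence support inside \<open>S\<close>. If moreover
the support of \<open>r\<close> were not repeated, some column \<open>x\<close> of \<open>S\<close> would avoid the other rows of
weight at least 3; the rows covering \<open>x\<close> together with two further columns of \<open>S\<close> would then be
two rows of weight 2 meeting exactly in \<open>x\<close>.\<close>

lemma no_three_pairwise_orthogonal_C2:
  fixes x1 x2 y1 y2 z1 z2 :: complex
  assumes "x1 \<noteq> 0 \<or> x2 \<noteq> 0" and "y1 \<noteq> 0 \<or> y2 \<noteq> 0" and "z1 \<noteq> 0 \<or> z2 \<noteq> 0"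
    and xy: "x1 * cnj y1 + x2 * cnj y2 = 0"
    and xz: "x1 * cnj z1 + x2 * cnj z2 = 0"
    and yz: "y1 * cnj z1 + y2 * cnj z2 = 0"
  shows False
proof -
  txt \<open>\<open>y\<close> and \<open>z\<close> are orthogonal to \<open>x \<noteq> 0\<close>, hence parallel; a vector parallel and
    orthogonal to \<open>y \<noteq> 0\<close> vanishes.\<close>
  define D where "D = cnj y1 * cnj z2 - cnj y2 * cnj z1"
  have "x1 * D = cnj z2 * (x1 * cnj y1 + x2 * cnj y2) - cnj y2 * (x1 * cnj z1 + x2 * cnj z2)"
    "x2 * D = cnj y1 * (x1 * cnj z1 + x2 * cnj z2) - cnj z1 * (x1 * cnj y1 + x2 * cnj y2)"
    unfolding D_def by algebra+
  with assms(1) xy xz have "D = 0" by auto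
  then have parallel: "y1 * z2 = y2 * z1"
    unfolding D_def by (metis complex_cnj_cancel_iff complex_cnj_diff complex_cnj_mult right_minus_eq)
  define N where "N = y1 * cnj y1 + y2 * cnj y2"
  have "N = of_real ((norm y1)\<^sup>2 + (norm y2)\<^sup>2)"
    unfolding N_def by (simp only: of_real_add complex_norm_square)
  with assms(2) have "N \<noteq> 0"
    by (simp add: add_nonneg_eq_0_iff del: of_real_add)
  have "cnj (y1 * cnj z1 + y2 * cnj z2) = z1 * cnj y1 + z2 * cnj y2" by simp
  with yz have zy: "z1 * cnj y1 + z2 * cnj y2 = 0" by (metis complex_cnj_zero)
  have "z1 * N = y1 * (z1 * cnj y1 + z2 * cnj y2)" "z2 * N = y2 * (z1 * cnj y1 + z2 * cnj y2)"
    unfolding N_def using parallel by algebra+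
  with zy \<open>N \<noteq> 0\<close> assms(3) show False by simp
qed

lemma unitary_mat_rows_orthonormal:
  assumes "unitary_mat U"
  shows "(\<Sum>j\<in>UNIV. U $ i $ j * cnj (U $ i' $ j)) = (if i = i' then 1 else 0)"
proof -
  have "(U ** conj_transpose U) $ i $ i' = mat 1 $ i $ i'"
    using assms unfolding unitary_mat_def by simp
  then show ?thesis by (simp add: matrix_matrix_mult_def conj_transpose_def mat_def)
qed

lemma unitary_mat_columns_orthonormal:
  assumes "unitary_mat U"
  shows "(\<Sum>i\<in>UNIV. cnj (U $ i $ j) * U $ i $ k) = (if j = k then 1 else 0)"
proof -
  have "(conj_transpose U ** U) $ j $ k = mat 1 $ j $ k"
    using assms unfolding unitary_mat_def by simp
  then show ?thesis by (simp add: matrix_matrix_mult_def conj_transpose_def mat_def)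
qed

lemma row_support_pattern: "row_support (pattern A) i = {j. A $ i $ j \<noteq> 0}"
  by (simp add: row_support_def pattern_def)

lemma unitary_pattern_row_support_nonempty:
  assumes "unitary_pattern P"
  shows "row_support P i \<noteq> {}"
proof
  obtain U where U: "unitary_mat U" "pattern U = P"
    using assms unfolding unitary_pattern_def by blast
  assume "row_support P i = {}"
  then have "U $ i $ j = 0" for j
    using U(2) row_support_pattern[of U i] by auto
  then show False using unitary_mat_rows_orthonormal[OF U(1), of i i] by simp
qed

lemma unitary_pattern_row_supports_Int_card_neq_1:
  assumes "unitary_pattern P" and "i \<noteq> i'"
  shows "card (row_support P i \<inter> row_support P i') \<noteq> 1"
proof
  obtain U where U: "unitary_mat U" "pattern U = P"
    using assms unfolding unitary_pattern_def by blast
  assume "card (row_support P i \<inter> row_support P i') = 1"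
  then obtain j where j: "{l. U $ i $ l \<noteq> 0} \<inter> {l. U $ i' $ l \<noteq> 0} = {j}"
    using U(2) by (auto simp: card_1_singleton_iff row_support_pattern)
  have "(\<Sum>l\<in>UNIV. U $ i $ l * cnj (U $ i' $ l)) = (\<Sum>l\<in>{j}. U $ i $ l * cnj (U $ i' $ l))"
    by (rule sum.mono_neutral_right) (use j in auto)
  with j show False using unitary_mat_rows_orthonormal[OF U(1), of i i'] assms(2) by auto
qed

lemma unitary_pattern_card_rows_through_columns_neq_1:
  assumes "unitary_pattern P" and "j \<noteq> k"
  shows "card {i. j \<in> row_support P i \<and> k \<in> row_support P i} \<noteq> 1"
proof
  obtain U where U: "unitary_mat U" "pattern U = P"
    using assms unfolding unitary_pattern_def by blast
  assume "card {i. j \<in> row_support P i \<and> k \<in> row_support P i} = 1"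
  then obtain i where i: "{l. U $ l $ j \<noteq> 0 \<and> U $ l $ k \<noteq> 0} = {i}"
    using U(2) by (auto simp: card_1_singleton_iff row_support_pattern)
  have "(\<Sum>l\<in>UNIV. cnj (U $ l $ j) * U $ l $ k) = (\<Sum>l\<in>{i}. cnj (U $ l $ j) * U $ l $ k)"
    by (rule sum.mono_neutral_right) (use i in auto)
  with i show False using unitary_mat_columns_orthonormal[OF U(1), of j k] assms(2) by auto
qed

lemma unitary_pattern_card_rows_within_two_columns:
  assumes "unitary_pattern P" and "card T = 2"
  shows "card {i. row_support P i \<subseteq> T} \<le> 2"
proof (rule ccontr)
  obtain U where U: "unitary_mat U" "pattern U = P"
    using assms unfolding unitary_pattern_def by blast
  obtain t1 t2 where T: "T = {t1, t2}" "t1 \<noteq> t2"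
    using assms(2) by (auto simp: card_2_iff)
  assume "\<not> card {i. row_support P i \<subseteq> T} \<le> 2"
  then have "3 \<le> card {i. row_support P i \<subseteq> T}" by simp
  then obtain B where "B \<subseteq> {i. row_support P i \<subseteq> T}" "card B = 3"
    by (meson obtain_subset_with_card_n)
  then obtain a b c where abc: "{a, b, c} \<subseteq> {i. row_support P i \<subseteq> T}" "a \<noteq> b" "a \<noteq> c" "b \<noteq> c"
    by (auto simp: card_3_iff)
  have supp: "U $ i $ l = 0" if "i \<in> {a, b, c}" "l \<noteq> t1" "l \<noteq> t2" for i l
    using abc(1) that T U(2) by (auto simp: row_support_pattern)
  have orth: "U $ i $ t1 * cnj (U $ i' $ t1) + U $ i $ t2 * cnj (U $ i' $ t2) = 0"
    if "i \<in> {a, b, c}" "i \<noteq> i'" for i i'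
  proof -
    have "(\<Sum>l\<in>UNIV. U $ i $ l * cnj (U $ i' $ l)) = (\<Sum>l\<in>{t1, t2}. U $ i $ l * cnj (U $ i' $ l))"
      by (rule sum.mono_neutral_right) (use supp that in auto)
    then show ?thesis using unitary_mat_rows_orthonormal[OF U(1), of i i'] that T(2) by simp
  qed
  have nonzero: "U $ i $ t1 \<noteq> 0 \<or> U $ i $ t2 \<noteq> 0" if "i \<in> {a, b, c}" for i
    using unitary_pattern_row_support_nonempty[OF assms(1), of i] supp[OF that] U(2)
    by (auto simp: row_support_pattern) metis
  show False
    using no_three_pairwise_orthogonal_C2[OF nonzero[of a] nonzero[of b] nonzero[of c]
        orth[of a b] orth[of a c] orth[of b c]] abc(2-4) by simp
qed

lemma unitary_pattern_row_supports_Int_ge_2: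
  assumes "unitary_pattern P" and "i \<noteq> i'"
    and "row_support P i \<inter> row_support P i' \<noteq> {}"
  shows "2 \<le> card (row_support P i \<inter> row_support P i')"
proof -
  have "card (row_support P i \<inter> row_support P i') \<noteq> 0" using assms(3) by simp
  with unitary_pattern_row_supports_Int_card_neq_1[OF assms(1,2)] show ?thesis by linarith
qed

lemma unitary_pattern_other_row_through_pair:
  assumes "unitary_pattern P" and "j \<noteq> k"
    and "j \<in> row_support P r" and "k \<in> row_support P r"
  obtains i where "i \<noteq> r" "j \<in> row_support P i" "k \<in> row_support P i"
proof -
  let ?R = "{i. j \<in> row_support P i \<and> k \<in> row_support P i}"
  have "?R \<noteq> {r}"
    using unitary_pattern_card_rows_through_columns_neq_1[OF assms(1,2)] by auto
  moreover have "r \<in> ?R" using assms(3,4) by simp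
  ultimately show ?thesis using that by blast
qed

lemma row_support_eq_doubleton:
  fixes P :: "nat ^ 'n::finite ^ 'm"
  assumes "row_weight P i \<le> 2" and "j \<noteq> k"
    and "j \<in> row_support P i" and "k \<in> row_support P i"
  shows "row_support P i = {j, k}"
  using assms by (intro card_seteq[symmetric]) (auto simp: row_weight_def)

lemma unitary_pattern_point_avoiding_heavy_rows:
  assumes "unitary_pattern P" and "card H \<le> 2"
    and H: "\<forall>h\<in>H. \<not> row_support P r \<subseteq> row_support P h"
    and light: "\<And>i. i \<noteq> r \<Longrightarrow> i \<notin> H \<Longrightarrow> row_weight P i \<le> 2"
  obtains x where "x \<in> row_support P r" "\<forall>h\<in>H. x \<notin> row_support P h"
proof (cases "H = {}")
  case True
  obtain x where "x \<in> row_support P r"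
    using unitary_pattern_row_support_nonempty[OF assms(1)] by blast
  with True show ?thesis using that by blast
next
  case False
  then have "card H \<noteq> 0" by simp
  with \<open>card H \<le> 2\<close> consider "card H = 1" | "card H = 2" by linarith
  then obtain h1 h2 where H12: "H = {h1, h2}"
  proof cases
    case 1
    then obtain h where "H = {h}" by (auto simp: card_1_singleton_iff)
    then show ?thesis using that[of h h] by simp
  next
    case 2
    then show ?thesis using that by (auto simp: card_2_iff)
  qed
  obtain x y where x: "x \<in> row_support P r" "x \<notin> row_support P h1"
    and y: "y \<in> row_support P r" "y \<notin> row_support P h2"
    using H unfolding H12 by blast
  consider "x \<notin> row_support P h2" | "y \<notin> row_support P h1"
    | "x \<in> row_support P h2" "y \<in> row_support P h1" by blast
  then show ?thesis
  proof cases
    case 1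
    with that x H12 show ?thesis by blast
  next
    case 2
    with that y H12 show ?thesis by blast
  next
    case 3
    then have "x \<noteq> y" using x y by blast
    then obtain i where i: "i \<noteq> r" "x \<in> row_support P i" "y \<in> row_support P i"
      using unitary_pattern_other_row_through_pair[OF assms(1) _ x(1) y(1)] by blast
    have "i \<noteq> h1" "i \<noteq> h2" using i x y by auto
    then have "row_weight P i \<le> 2" using light i(1) H12 by blast
    then have "row_support P i = {x, y}"
      using row_support_eq_doubleton \<open>x \<noteq> y\<close> i(2,3) by blast
    then have "row_support P i \<inter> row_support P h1 = {y}" using x 3 by auto
    then show ?thesis using unitary_pattern_row_supports_Int_card_neq_1[OF assms(1) \<open>i \<noteq> h1\<close>] by simp
  qed
qed

lemma unitary_pattern_max_row_repeated:
  assumes "unitary_pattern P" and "3 \<le> row_weight P r"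
    and max: "\<forall>i. row_weight P i \<le> row_weight P r"
    and "card {i. 3 \<le> row_weight P i} \<le> 3"
  shows "\<exists>r'. r' \<noteq> r \<and> row_support P r' = row_support P r"
proof (rule ccontr)
  assume unique: "\<not> ?thesis"
  define H where "H = {i. 3 \<le> row_weight P i} - {r}"
  have "card H \<le> 2"
    using assms(2,4) unfolding H_def by simp
  have not_above: "\<not> row_support P r \<subseteq> row_support P h" if "h \<noteq> r" for h
  proof
    assume "row_support P r \<subseteq> row_support P h"
    with max have "row_support P r = row_support P h"
      by (intro card_seteq) (auto simp: row_weight_def)
    with unique that show False by auto
  qed
  have light: "row_weight P i \<le> 2" if "i \<noteq> r" "i \<notin> H" for i
    using that unfolding H_def by simp
  obtain x where x: "x \<in> row_support P r" "\<forall>h\<in>H. x \<notin> row_support P h"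
    using unitary_pattern_point_avoiding_heavy_rows[OF assms(1) \<open>card H \<le> 2\<close> _ light] not_above
    unfolding H_def by blast
  have row_through_x: "row_support P i = {x, y}"
    if "i \<noteq> r" "x \<in> row_support P i" "y \<in> row_support P i" "x \<noteq> y" for i y
    using row_support_eq_doubleton[OF light] that x(2) by blast
  have "\<not> card (row_support P r - {x}) \<le> Suc 0"
    using assms(2) x(1) by (simp add: row_weight_def)
  then obtain y z where yz: "y \<in> row_support P r - {x}" "z \<in> row_support P r - {x}" "y \<noteq> z"
    by (auto simp: card_le_Suc0_iff_eq)
  from yz have y: "x \<noteq> y" "y \<in> row_support P r" and z: "x \<noteq> z" "z \<in> row_support P r"
    by auto
  obtain i where i: "i \<noteq> r" "x \<in> row_support P i" "y \<in> row_support P i"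
    using unitary_pattern_other_row_through_pair[OF assms(1) y(1) x(1) y(2)] .
  obtain i' where i': "i' \<noteq> r" "x \<in> row_support P i'" "z \<in> row_support P i'"
    using unitary_pattern_other_row_through_pair[OF assms(1) z(1) x(1) z(2)] .
  have "row_support P i = {x, y}" "row_support P i' = {x, z}"
    using row_through_x i i' yz by auto
  moreover from this have "i \<noteq> i'" using yz by auto
  ultimately show False
    using unitary_pattern_row_supports_Int_card_neq_1[OF assms(1), of i i'] yz by (auto simp: Int_insert_left)
qed

lemma card_rows_disjoint_from_weight_4_row:
  fixes P :: "nat ^ 6 ^ 6"
  assumes "unitary_pattern P" and "row_weight P r = 4"
  shows "card {i. row_support P i \<inter> row_support P r = {}} \<le> 2"
proof -
  have "card (- row_support P r) = 2"
    using assms(2) card_Diff_subset[of "row_support P r" UNIV]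
    by (simp add: Compl_eq_Diff_UNIV row_weight_def)
  moreover have "{i. row_support P i \<inter> row_support P r = {}} = {i. row_support P i \<subseteq> - row_support P r}"
    by blast
  ultimately show ?thesis using unitary_pattern_card_rows_within_two_columns[OF assms(1)] by simp
qed

lemma four_rows_of_weight_ge_2:
  fixes P :: "nat ^ 6 ^ 6"
  assumes "unitary_pattern P" and "row_weight P r = 4"
  shows "4 \<le> card {i. 2 \<le> row_weight P i}"
proof -
  let ?Z = "{i. row_support P i \<inter> row_support P r = {}}"
  have "- ?Z \<subseteq> {i. 2 \<le> row_weight P i}"
  proof
    fix i assume i: "i \<in> - ?Z"
    show "i \<in> {i. 2 \<le> row_weight P i}"
    proof (cases "i = r")
      case False
      with i have "2 \<le> card (row_support P i \<inter> row_support P r)"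
        using unitary_pattern_row_supports_Int_ge_2[OF assms(1)] by blast
      also have "\<dots> \<le> row_weight P i" by (simp add: row_weight_def card_mono)
      finally show ?thesis by simp
    qed (use assms(2) in simp)
  qed
  then have "card (- ?Z) \<le> card {i. 2 \<le> row_weight P i}" by (simp add: card_mono)
  moreover have "card (- ?Z) = 6 - card ?Z"
    using card_Diff_subset[of ?Z UNIV] by (simp add: Compl_eq_Diff_UNIV)
  ultimately show ?thesis using card_rows_disjoint_from_weight_4_row[OF assms] by linarith
qed

lemma weight_2_row_inside_weight_4_row:
  fixes P :: "nat ^ 6 ^ 6"
  assumes "unitary_pattern P" and "row_weight P r = 4"
    and "card {i. 3 \<le> row_weight P i} \<le> 3"
  shows "\<exists>s. row_weight P s = 2 \<and> row_support P s \<subseteq> row_support P r"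
proof -
  let ?X = "{i. 3 \<le> row_weight P i}" and ?Z = "{i. row_support P i \<inter> row_support P r = {}}"
  have "card (?X \<union> ?Z) < card (UNIV :: 6 set)"
    using card_Un_le[of ?X ?Z] assms(3) card_rows_disjoint_from_weight_4_row[OF assms(1,2)] by simp
  then have "?X \<union> ?Z \<noteq> UNIV" by auto
  then obtain s where s: "s \<notin> ?X" "s \<notin> ?Z" by blast
  have "s \<noteq> r" using s(1) assms(2) by auto
  then have "2 \<le> card (row_support P s \<inter> row_support P r)"
    using unitary_pattern_row_supports_Int_ge_2[OF assms(1)] s(2) by blast
  moreover have "row_weight P s \<le> 2" using s(1) by simp
  ultimately have "row_support P s \<inter> row_support P r = row_support P s"
    by (intro card_seteq) (auto simp: row_weight_def)
  with \<open>row_weight P s \<le> 2\<close> \<open>2 \<le> card _\<close> show ?thesis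
    by (metis Int_lower2 le_antisym row_weight_def)
qed

theorem mainTheorem5:
  fixes P :: "nat ^ 6 ^ 6" and r :: 6
  assumes "unitary_pattern P"
    and "row_weight P r = 4"
    and "\<forall>i. row_weight P i \<le> 4"
  shows "(((\<exists>r'. r' \<noteq> r \<and> row_weight P r' = 4 \<and> row_support P r' = row_support P r)
            \<and> (\<exists>s. row_weight P s = 2 \<and> row_support P s \<subseteq> row_support P r))
         \<or> card {i. row_weight P i \<ge> 3} \<ge> 4)
         \<and> card {i. row_weight P i \<ge> 2} \<ge> 4"
proof (cases "card {i. row_weight P i \<ge> 3} \<ge> 4")
  case False
  then have few: "card {i. 3 \<le> row_weight P i} \<le> 3" by simp
  obtain r' where "r' \<noteq> r" "row_support P r' = row_support P r"
    using unitary_pattern_max_row_repeated[OF assms(1) _ _ few, of r] assms(2,3) by auto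
  moreover from this have "row_weight P r' = 4"
    using assms(2) by (simp add: row_weight_def)
  ultimately show ?thesis
    using weight_2_row_inside_weight_4_row[OF assms(1,2) few] four_rows_of_weight_ge_2[OF assms(1,2)]
    by blast
qed (use four_rows_of_weight_ge_2[OF assms(1,2)] in simp)

end
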